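(* Let $N_\mathrm{t},N_\mathrm{r}\ge1$ and let $\mathbf{H}\in\mathbb{C}^{N_\mathrm{r}\times N_\mathrm{t}}$ have i.i.d. entries distributed as $\mathcal{CN}(0,1)$. Let $\check{\mathbf{x}}_k,\check{\mathbf{x}}_{k'}\in\{-1,+1\}^{N_\mathrm{t}}$ (BPSK labels) differ in exactly $d$ coordinates, $1\le d\le N_\mathrm{t}$, and set $\mathbf{g}_k=\mathbf{H}\check{\mathbf{x}}_k$, $\mathbf{g}_{k'}=\mathbf{H}\check{\mathbf{x}}_{k'}$. Then $$\mathbb{P}\big[\operatorname{sign}(\mathbf{g}_k)=\operatorname{sign}(\mathbf{g}_{k'})\big]=\left[\frac{2}{\pi}\arctan\sqrt{\frac{N_\mathrm{t}-d}{d}}\right]^{2N_\mathrm{r}}.$$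
   Context: For real $a$, $\operatorname{sign}(a)=+1$ if $a\ge0$ and $-1$ if $a<0$; for complex $a$, $\operatorname{sign}(a)=\operatorname{sign}(\Re\{a\})+j\operatorname{sign}(\Im\{a\})$; on vectors it acts element-wise. *)

theory Defs
  imports "HOL-Probability.Probability"
begin

definition rsign :: "real \<Rightarrow> real" where
  "rsign a = (if a \<ge> 0 then 1 else -1)"

definition csign :: "complex \<Rightarrow> complex" where
  "csign z = Complex (rsign (Re z)) (rsign (Im z))"

text \<open>CN(0,1): the 2 Nr Nt real random variables Re (H i j), Im (H i j)
  are mutually independent, each distributed N(0, 1/2).\<close>
definition iid_CN_matrix ::
  "'a measure \<Rightarrow> nat \<Rightarrow> nat \<Rightarrow> (nat \<Rightarrow> nat \<Rightarrow> 'a \<Rightarrow> complex) \<Rightarrow> bool" where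
  "iid_CN_matrix M Nr Nt H \<longleftrightarrow>
     prob_space.indep_vars M (\<lambda>_. borel)
       (\<lambda>(i, j, b) \<omega>. if b then Re (H i j \<omega>) else Im (H i j \<omega>))
       ({..<Nr} \<times> {..<Nt} \<times> (UNIV :: bool set)) \<and>
     (\<forall>i<Nr. \<forall>j<Nt.
        distributed M lborel (\<lambda>\<omega>. Re (H i j \<omega>)) (\<lambda>x. ennreal (normal_density 0 (sqrt (1/2)) x)) \<and>
        distributed M lborel (\<lambda>\<omega>. Im (H i j \<omega>)) (\<lambda>x. ennreal (normal_density 0 (sqrt (1/2)) x)))"

definition mat_vec :: "nat \<Rightarrow> (nat \<Rightarrow> nat \<Rightarrow> complex) \<Rightarrow> (nat \<Rightarrow> real) \<Rightarrow> nat \<Rightarrow> complex" where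
  "mat_vec Nt A x i = (\<Sum>j<Nt. A i j * complex_of_real (x j))"

end

theory Submission
  imports Defs "HOL-Real_Asymp.Real_Asymp"
begin

text \<open>
  Real and imaginary parts of the rows of \<open>H\<close> give \<open>2 N\<^sub>r\<close> independent real rows of \<open>N\<^sub>t\<close>
  i.i.d. \<open>N(0, 1/2)\<close> entries, and the event is the conjunction of one sign event per row.
  Splitting a row's inner products with \<open>x\<close> and \<open>x'\<close> along the coordinates where the labels
  agree or differ writes them as \<open>U + V\<close> and \<open>U - V\<close> with independent centred normals \<open>U\<close>, \<open>V\<close>
  of variances \<open>(N\<^sub>t - d)/2\<close> and \<open>d/2\<close>. Up to a null set the signs agree iff \<open>|V/U| < 1\<close>,
  and \<open>V/U\<close> is Cauchy with scale \<open>\<surd>(d/(N\<^sub>t - d))\<close>, which gives the factor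
  \<open>(2/\<pi>) arctan \<surd>((N\<^sub>t - d)/d)\<close> per row.
\<close>

lemma nn_integral_mult_exp_neg_square_nonneg:
  fixes a :: real assumes a: "0 < a"
  shows "(\<integral>\<^sup>+u. ennreal (u * exp (- a * u\<^sup>2)) * indicator {0..} u \<partial>lborel) = ennreal (1 / (2 * a))"
proof -
  have "(\<integral>\<^sup>+u. ennreal (u * exp (- a * u\<^sup>2)) * indicator {0..} u \<partial>lborel)
      = ennreal (0 - (- exp (- a * 0\<^sup>2) / (2 * a)))"
  proof (rule nn_integral_FTC_atLeast)
    show "((\<lambda>u. - exp (- a * u\<^sup>2) / (2 * a)) \<longlongrightarrow> 0) at_top"
      using a by real_asymp
  qed (use a in \<open>auto intro!: derivative_eq_intros simp: field_simps\<close>)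
  then show ?thesis by simp
qed

lemma nn_integral_abs_mult_exp_neg_square:
  fixes a :: real assumes a: "0 < a"
  shows "(\<integral>\<^sup>+u. ennreal (\<bar>u\<bar> * exp (- a * u\<^sup>2)) \<partial>lborel) = ennreal (1 / a)"
proof -
  let ?f = "\<lambda>u::real. ennreal (\<bar>u\<bar> * exp (- a * u\<^sup>2))"
  have "(\<integral>\<^sup>+u. ?f u \<partial>lborel) = (\<integral>\<^sup>+u. ?f u * indicator {0..} u + ?f u * indicator {..<0} u \<partial>lborel)"
    by (intro nn_integral_cong) (auto split: split_indicator)
  also have "\<dots> = (\<integral>\<^sup>+u. ?f u * indicator {0..} u \<partial>lborel) + (\<integral>\<^sup>+u. ?f u * indicator {..<0} u \<partial>lborel)"
    by (rule nn_integral_add) auto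
  also have "(\<integral>\<^sup>+u. ?f u * indicator {..<0} u \<partial>lborel)
      = (\<integral>\<^sup>+u. ?f (0 + (-1) * u) * indicator {..<0} (0 + (-1) * u) \<partial>lborel)"
    using nn_integral_real_affine[of "\<lambda>u. ?f u * indicator {..<0} u" "-1" 0] by simp
  also have "\<dots> = (\<integral>\<^sup>+u. ?f u * indicator {0..} u \<partial>lborel)"
    by (intro nn_integral_cong_AE, use AE_lborel_singleton[of 0] in eventually_elim)
       (auto split: split_indicator)
  also have "(\<integral>\<^sup>+u. ?f u * indicator {0..} u \<partial>lborel) = ennreal (1 / (2 * a))"
    by (rule trans[OF nn_integral_cong nn_integral_mult_exp_neg_square_nonneg[OF a]])
       (auto split: split_indicator)
  finally show ?thesis using a by (simp add: ennreal_plus[symmetric] del: ennreal_plus)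
qed

lemma normal_density_mult_normal_density_scaled:
  fixes s1 s2 u s :: real assumes "0 < s1" "0 < s2"
  shows "normal_density 0 s1 u * normal_density 0 s2 (u * s)
    = 1 / (2 * pi * s1 * s2) * exp (- ((s2\<^sup>2 + s\<^sup>2 * s1\<^sup>2) / (2 * s1\<^sup>2 * s2\<^sup>2)) * u\<^sup>2)"
proof -
  have "sqrt (2 * pi * s1\<^sup>2) * sqrt (2 * pi * s2\<^sup>2) = sqrt ((2 * pi * s1 * s2)\<^sup>2)"
    by (simp add: real_sqrt_mult[symmetric] power2_eq_square mult_ac)
  also have "\<dots> = 2 * pi * s1 * s2" using assms by simp
  finally have "sqrt (2 * pi * s1\<^sup>2) * sqrt (2 * pi * s2\<^sup>2) = 2 * pi * s1 * s2" .
  moreover have "- (u\<^sup>2 / (2 * s1\<^sup>2)) - (u * s)\<^sup>2 / (2 * s2\<^sup>2)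
      = - ((s2\<^sup>2 + s\<^sup>2 * s1\<^sup>2) / (2 * s1\<^sup>2 * s2\<^sup>2)) * u\<^sup>2"
    using assms by (simp add: field_simps power2_eq_square)
  ultimately show ?thesis
    unfolding normal_density_def by (simp add: mult_exp_exp del: exp_diff)
qed

lemma nn_integral_abs_mult_normal_density_product:
  fixes s1 s2 s :: real assumes s1: "0 < s1" and s2: "0 < s2"
  shows "(\<integral>\<^sup>+u. ennreal (\<bar>u\<bar> * (normal_density 0 s1 u * normal_density 0 s2 (u * s))) \<partial>lborel)
    = ennreal (s1 * s2 / (pi * (s2\<^sup>2 + s\<^sup>2 * s1\<^sup>2)))"
proof -
  define a where "a = (s2\<^sup>2 + s\<^sup>2 * s1\<^sup>2) / (2 * s1\<^sup>2 * s2\<^sup>2)"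
  have a: "0 < a" unfolding a_def using s1 s2 by (intro divide_pos_pos add_pos_nonneg) auto
  have "(\<integral>\<^sup>+u. ennreal (\<bar>u\<bar> * (normal_density 0 s1 u * normal_density 0 s2 (u * s))) \<partial>lborel)
      = (\<integral>\<^sup>+u. ennreal (1 / (2 * pi * s1 * s2)) * ennreal (\<bar>u\<bar> * exp (- a * u\<^sup>2)) \<partial>lborel)"
    using s1 s2 by (intro nn_integral_cong)
      (simp add: normal_density_mult_normal_density_scaled a_def ennreal_mult[symmetric] mult_ac)
  also have "\<dots> = ennreal (1 / (2 * pi * s1 * s2)) * ennreal (1 / a)"
    using nn_integral_abs_mult_exp_neg_square[OF a] by (subst nn_integral_cmult) auto
  also have "\<dots> = ennreal (s1 * s2 / (pi * (s2\<^sup>2 + s\<^sup>2 * s1\<^sup>2)))"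
    using s1 s2 a by (simp add: ennreal_mult[symmetric] a_def field_simps power2_eq_square)
  finally show ?thesis .
qed

text \<open>The integrand is the Cauchy density with scale \<open>s2 / s1\<close>.\<close>

lemma nn_integral_cauchy_density_interval:
  fixes s1 s2 :: real assumes s1: "0 < s1" and s2: "0 < s2"
  shows "(\<integral>\<^sup>+s. ennreal (s1 * s2 / (pi * (s2\<^sup>2 + s\<^sup>2 * s1\<^sup>2))) * indicator {-1<..<1} s \<partial>lborel)
    = ennreal (2 / pi * arctan (s1 / s2))"
proof -
  define h where "h s = s1 * s2 / (pi * (s2\<^sup>2 + s\<^sup>2 * s1\<^sup>2))" for s
  have h_deriv: "((\<lambda>s. arctan (s1 / s2 * s) / pi) has_real_derivative h s) (at s)" for s
  proof -
    have "((\<lambda>s. arctan (s1 / s2 * s) / pi) has_real_derivative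
        (1 / (1 + (s1 / s2 * s)\<^sup>2) * (s1 / s2 * 1) / pi)) (at s)"
      by (rule derivative_eq_intros refl | simp add: inverse_eq_divide)+
    moreover have "1 + (s1 / s2 * s)\<^sup>2 \<noteq> 0" "s2\<^sup>2 + s\<^sup>2 * s1\<^sup>2 \<noteq> 0"
      using s2 by (auto simp: add_nonneg_eq_0_iff)
    ultimately show ?thesis
      using s1 s2 unfolding h_def by (simp add: field_simps power2_eq_square)
  qed
  have "has_bochner_integral lborel (\<lambda>s. h s * indicator {-1..1} s)
      (arctan (s1 / s2 * 1) / pi - arctan (s1 / s2 * (-1)) / pi)"
    using s1 s2 unfolding h_def
    by (intro has_bochner_integral_FTC_Icc_real h_deriv[unfolded h_def] continuous_intros)
       (auto simp: add_nonneg_eq_0_iff)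
  moreover have "0 \<le> h s" for s unfolding h_def using s1 s2 by auto
  ultimately have "(\<integral>\<^sup>+s. ennreal (h s * indicator {-1..1} s) \<partial>lborel) = ennreal (2 / pi * arctan (s1 / s2))"
    by (subst nn_integral_eq_integral)
       (auto simp: has_bochner_integral_iff arctan_minus split: split_indicator)
  moreover have "(\<integral>\<^sup>+s. ennreal (h s) * indicator {-1<..<1} s \<partial>lborel)
      = (\<integral>\<^sup>+s. ennreal (h s * indicator {-1..1} s) \<partial>lborel)"
    by (rule nn_integral_cong_AE)
       (use AE_lborel_singleton[of 1] AE_lborel_singleton[of "-1"] in
         \<open>eventually_elim, auto split: split_indicator\<close>)
  ultimately show ?thesis by (simp add: h_def)
qed

lemma rsign_measurable[measurable]: "rsign \<in> borel_measurable borel"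
  unfolding rsign_def[abs_def] by measurable

definition sign_agree_set :: "(real \<times> real) set" where
  "sign_agree_set = {(u, v). rsign (u + v) = rsign (u - v)}"

lemma sets_sign_agree_set[measurable]: "sign_agree_set \<in> sets (borel \<Otimes>\<^sub>M borel)"
proof -
  have "sign_agree_set = {p \<in> space (borel \<Otimes>\<^sub>M borel). rsign (fst p + snd p) = rsign (fst p - snd p)}"
    by (auto simp: sign_agree_set_def space_pair_measure)
  also have "\<dots> \<in> sets (borel \<Otimes>\<^sub>M borel)" by measurable
  finally show ?thesis .
qed

lemma scaled_mem_sign_agree_set_iff:
  fixes u s :: real assumes "u \<noteq> 0" "s \<noteq> 1" "s \<noteq> -1"
  shows "(u, u * s) \<in> sign_agree_set \<longleftrightarrow> -1 < s \<and> s < 1"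
proof -
  have "u + u * s = u * (1 + s)" "u - u * s = u * (1 - s)" by (simp_all add: algebra_simps)
  then show ?thesis using assms unfolding sign_agree_set_def rsign_def
    by (cases "u > 0") (auto simp: zero_le_mult_iff)
qed

lemma nn_integral_sign_agree_slice:
  fixes g :: "real \<Rightarrow> ennreal" and u :: real
  assumes [measurable]: "g \<in> borel_measurable borel" and u: "u \<noteq> 0"
  shows "(\<integral>\<^sup>+v. g v * indicator sign_agree_set (u, v) \<partial>lborel)
    = ennreal \<bar>u\<bar> * (\<integral>\<^sup>+s. g (u * s) * indicator {-1<..<1} s \<partial>lborel)"
proof -
  have "(\<integral>\<^sup>+v. g v * indicator sign_agree_set (u, v) \<partial>lborel)
      = ennreal \<bar>u\<bar> * (\<integral>\<^sup>+s. g (0 + u * s) * indicator sign_agree_set (u, 0 + u * s) \<partial>lborel)"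
    by (rule nn_integral_real_affine[OF _ u]) measurable
  also have "(\<integral>\<^sup>+s. g (0 + u * s) * indicator sign_agree_set (u, 0 + u * s) \<partial>lborel)
      = (\<integral>\<^sup>+s. g (u * s) * indicator {-1<..<1} s \<partial>lborel)"
    by (rule nn_integral_cong_AE)
       (use AE_lborel_singleton[of 1] AE_lborel_singleton[of "-1"] in
         \<open>eventually_elim, simp add: indicator_def scaled_mem_sign_agree_set_iff[OF u]\<close>)
  finally show ?thesis .
qed

lemma nn_integral_normal_density_sign_agree:
  fixes s1 s2 :: real assumes s1: "0 < s1" and s2: "0 < s2"
  shows "(\<integral>\<^sup>+u. \<integral>\<^sup>+v. ennreal (normal_density 0 s1 u) * ennreal (normal_density 0 s2 v)
      * indicator sign_agree_set (u, v) \<partial>lborel \<partial>lborel) = ennreal (2 / pi * arctan (s1 / s2))"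
proof -
  let ?G = "\<lambda>u s. ennreal (\<bar>u\<bar> * (normal_density 0 s1 u * normal_density 0 s2 (u * s)))
    * indicator {-1<..<1::real} s"
  have "(\<integral>\<^sup>+u. \<integral>\<^sup>+v. ennreal (normal_density 0 s1 u) * ennreal (normal_density 0 s2 v)
      * indicator sign_agree_set (u, v) \<partial>lborel \<partial>lborel)
      = (\<integral>\<^sup>+u. ennreal (normal_density 0 s1 u) * (\<integral>\<^sup>+v. ennreal (normal_density 0 s2 v)
      * indicator sign_agree_set (u, v) \<partial>lborel) \<partial>lborel)"
    by (subst nn_integral_cmult[symmetric]) (auto simp: mult.assoc)
  also have "\<dots> = (\<integral>\<^sup>+u. \<integral>\<^sup>+s. ?G u s \<partial>lborel \<partial>lborel)"
  proof (rule nn_integral_cong_AE)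
    show "AE u in lborel. ennreal (normal_density 0 s1 u) * (\<integral>\<^sup>+v. ennreal (normal_density 0 s2 v)
      * indicator sign_agree_set (u, v) \<partial>lborel) = (\<integral>\<^sup>+s. ?G u s \<partial>lborel)"
      using AE_lborel_singleton[of 0]
    proof eventually_elim
      case (elim u)
      then show ?case
        by (simp add: nn_integral_sign_agree_slice nn_integral_cmult[symmetric] ennreal_mult mult_ac)
    qed
  qed
  also have "\<dots> = (\<integral>\<^sup>+s. \<integral>\<^sup>+u. ?G u s \<partial>lborel \<partial>lborel)"
    by (rule lborel_pair.Fubini'[symmetric]) measurable
  also have "\<dots> = (\<integral>\<^sup>+s. ennreal (s1 * s2 / (pi * (s2\<^sup>2 + s\<^sup>2 * s1\<^sup>2))) * indicator {-1<..<1} s \<partial>lborel)"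
    by (simp add: nn_integral_multc nn_integral_abs_mult_normal_density_product[OF s1 s2])
  also have "\<dots> = ennreal (2 / pi * arctan (s1 / s2))"
    by (rule nn_integral_cauchy_density_interval[OF s1 s2])
  finally show ?thesis .
qed

lemma (in prob_space) prob_sign_agree_indep_normal:
  fixes U V :: "'a \<Rightarrow> real" and s1 s2 :: real
  assumes U: "distributed M lborel U (\<lambda>x. ennreal (normal_density 0 s1 x))"
    and V: "distributed M lborel V (\<lambda>x. ennreal (normal_density 0 s2 x))"
    and indep: "indep_var lborel U lborel V" and s1: "0 < s1" and s2: "0 < s2"
  shows "prob {\<omega> \<in> space M. rsign (U \<omega> + V \<omega>) = rsign (U \<omega> - V \<omega>)} = 2 / pi * arctan (s1 / s2)"
proof -
  have joint: "distributed M (lborel \<Otimes>\<^sub>M lborel) (\<lambda>\<omega>. (U \<omega>, V \<omega>))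
      (\<lambda>(u, v). ennreal (normal_density 0 s1 u) * ennreal (normal_density 0 s2 v))"
    by (rule distributed_joint_indep[OF sigma_finite_lborel sigma_finite_lborel U V indep])
  have agree_sets: "sign_agree_set \<in> sets (lborel \<Otimes>\<^sub>M lborel)"
    using sets_sign_agree_set by (simp add: sets_pair_measure_cong[OF sets_lborel sets_lborel])
  have "{\<omega> \<in> space M. rsign (U \<omega> + V \<omega>) = rsign (U \<omega> - V \<omega>)} = (\<lambda>\<omega>. (U \<omega>, V \<omega>)) -` sign_agree_set \<inter> space M"
    by (auto simp: sign_agree_set_def)
  then have "emeasure M {\<omega> \<in> space M. rsign (U \<omega> + V \<omega>) = rsign (U \<omega> - V \<omega>)}
      = (\<integral>\<^sup>+p. (\<lambda>(u, v). ennreal (normal_density 0 s1 u) * ennreal (normal_density 0 s2 v)) p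
          * indicator sign_agree_set p \<partial>(lborel \<Otimes>\<^sub>M lborel))"
    by (simp add: distributed_emeasure[OF joint agree_sets])
  also have "\<dots> = (\<integral>\<^sup>+u. \<integral>\<^sup>+v. ennreal (normal_density 0 s1 u) * ennreal (normal_density 0 s2 v)
      * indicator sign_agree_set (u, v) \<partial>lborel \<partial>lborel)"
  proof (rule trans[OF lborel.nn_integral_fst[symmetric]])
    show "(\<lambda>p. (case p of (u, v) \<Rightarrow> ennreal (normal_density 0 s1 u) * ennreal (normal_density 0 s2 v)) *
          indicator sign_agree_set p) \<in> borel_measurable (lborel \<Otimes>\<^sub>M lborel)"
      using agree_sets by measurable
  qed simp
  also have "\<dots> = ennreal (2 / pi * arctan (s1 / s2))"
    by (rule nn_integral_normal_density_sign_agree[OF s1 s2])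
  finally show ?thesis
    using s1 s2 by (simp add: measure_def)
qed

lemma distributed_lborel_measure_singleton:
  fixes X :: "'a \<Rightarrow> real"
  assumes "distributed M lborel X f"
  shows "measure M (X -` {a} \<inter> space M) = 0"
proof -
  have "emeasure M (X -` {a} \<inter> space M) = (\<integral>\<^sup>+x. f x * indicator {a} x \<partial>lborel)"
    by (rule distributed_emeasure[OF assms]) simp
  also have "\<dots> = 0"
    by (rule nn_integral_zero'[OF AE_mp[OF AE_lborel_singleton[of a]]]) auto
  finally show ?thesis by (simp add: measure_def)
qed

lemma (in prob_space) distributed_signed_sum_normal:
  fixes X :: "'k \<Rightarrow> 'a \<Rightarrow> real" and A :: "'k set" and c :: "'k \<Rightarrow> real"
  assumes indep: "indep_vars (\<lambda>_. borel) X A" and "finite A" "A \<noteq> {}"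
    and dist: "\<And>k. k \<in> A \<Longrightarrow> distributed M lborel (X k) (\<lambda>x. ennreal (normal_density 0 (sqrt (1/2)) x))"
    and c: "\<And>k. k \<in> A \<Longrightarrow> c k \<in> {-1, 1}"
  shows "distributed M lborel (\<lambda>\<omega>. \<Sum>k\<in>A. X k \<omega> * c k)
    (\<lambda>x. ennreal (normal_density 0 (sqrt (real (card A) / 2)) x))"
proof -
  have "distributed M lborel (\<lambda>\<omega>. X k \<omega> * c k) (\<lambda>x. ennreal (normal_density 0 (sqrt (1/2)) x))"
    if k: "k \<in> A" for k
  proof -
    have "c k \<noteq> 0" "\<bar>c k\<bar> = 1" using c[OF k] by auto
    moreover have "distributed M lborel (\<lambda>\<omega>. 0 + c k * X k \<omega>)
        (\<lambda>x. ennreal (normal_density (0 + c k * 0) (\<bar>c k\<bar> * sqrt (1/2)) x))"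
      by (rule normal_density_affine[OF dist[OF k]]) (use calculation in auto)
    ultimately show ?thesis by (simp add: mult.commute)
  qed
  moreover have "indep_vars (\<lambda>_. borel) (\<lambda>k \<omega>. X k \<omega> * c k) A"
    by (rule indep_vars_compose2[OF indep]) auto
  ultimately show ?thesis
    using sum_indep_normal[of A "\<lambda>k \<omega>. X k \<omega> * c k" "\<lambda>_. sqrt (1/2)" "\<lambda>_. 0"] assms(2,3) by simp
qed

lemma (in prob_space) prob_sign_agree_gaussian_sums:
  fixes X :: "'k \<Rightarrow> 'a \<Rightarrow> real" and J :: "'k set" and c c' :: "'k \<Rightarrow> real"
  assumes indep: "indep_vars (\<lambda>_. borel) X J" and fin: "finite J"
    and dist: "\<And>k. k \<in> J \<Longrightarrow> distributed M lborel (X k) (\<lambda>x. ennreal (normal_density 0 (sqrt (1/2)) x))"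
    and c: "\<And>k. k \<in> J \<Longrightarrow> c k \<in> {-1, 1}" and c': "\<And>k. k \<in> J \<Longrightarrow> c' k \<in> {-1, 1}"
    and differ: "{k\<in>J. c k \<noteq> c' k} \<noteq> {}"
  shows "prob {\<omega> \<in> space M. rsign (\<Sum>k\<in>J. X k \<omega> * c k) = rsign (\<Sum>k\<in>J. X k \<omega> * c' k)}
    = 2 / pi * arctan (sqrt (real (card {k\<in>J. c k = c' k}) / real (card {k\<in>J. c k \<noteq> c' k})))"
proof -
  define C where "C = {k\<in>J. c k = c' k}"
  define D where "D = {k\<in>J. c k \<noteq> c' k}"
  define U where "U \<omega> = (\<Sum>k\<in>C. X k \<omega> * c k)" for \<omega>
  define V where "V \<omega> = (\<Sum>k\<in>D. X k \<omega> * c k)" for \<omega>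
  have fin_CD: "finite C" "finite D" and CD: "C \<inter> D = {}" "J = C \<union> D" "C \<subseteq> J" "D \<subseteq> J"
    using fin by (auto simp: C_def D_def)
  have D: "D \<noteq> {}" using differ by (simp add: D_def)
  have dist_sum: "distributed M lborel (\<lambda>\<omega>. \<Sum>k\<in>A. X k \<omega> * c k)
      (\<lambda>x. ennreal (normal_density 0 (sqrt (real (card A) / 2)) x))"
    if "A \<subseteq> J" "A \<noteq> {}" for A
    using that fin dist c
    by (intro distributed_signed_sum_normal indep_vars_subset[OF indep]) (auto intro: finite_subset)
  have sum_c: "(\<Sum>k\<in>J. X k \<omega> * c k) = U \<omega> + V \<omega>" for \<omega>
    unfolding U_def V_def CD(2) using fin_CD CD(1) by (rule sum.union_disjoint)
  have sum_c': "(\<Sum>k\<in>J. X k \<omega> * c' k) = U \<omega> - V \<omega>" for \<omega>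
  proof -
    have "c' k = c k" if "k \<in> C" for k using that by (simp add: C_def)
    moreover have "c' k = - c k" if "k \<in> D" for k using that c[of k] c'[of k] by (auto simp: D_def)
    ultimately show ?thesis
      unfolding U_def V_def CD(2) using fin_CD CD(1)
      by (simp add: sum.union_disjoint sum_negf[symmetric])
  qed
  show ?thesis
  proof (cases "C = {}")
    case True
    have "{\<omega> \<in> space M. rsign (\<Sum>k\<in>J. X k \<omega> * c k) = rsign (\<Sum>k\<in>J. X k \<omega> * c' k)} = V -` {0} \<inter> space M"
      by (auto simp: sum_c sum_c' U_def True rsign_def)
    moreover have "prob (V -` {0} \<inter> space M) = 0"
      using dist_sum[OF CD(4) D, folded V_def] by (rule distributed_lborel_measure_singleton)
    ultimately show ?thesis using True by (simp flip: C_def)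
  next
    case False
    have "(\<lambda>f. \<Sum>k\<in>A. f k * c k) \<in> borel_measurable (PiM A (\<lambda>_. borel))" for A
      by (rule borel_measurable_sum, rule borel_measurable_times, rule measurable_component_singleton) auto
    then have "indep_var lborel ((\<lambda>f. \<Sum>k\<in>C. f k * c k) \<circ> (\<lambda>\<omega>. restrict (\<lambda>k. X k \<omega>) C))
        lborel ((\<lambda>f. \<Sum>k\<in>D. f k * c k) \<circ> (\<lambda>\<omega>. restrict (\<lambda>k. X k \<omega>) D))"
      by (intro indep_var_compose[OF indep_var_restrict[OF indep CD(1) CD(3) CD(4)]]) auto
    then have indep_UV: "indep_var lborel U lborel V"
      by (simp add: U_def[abs_def] V_def[abs_def] comp_def)
    have "0 < card C" "0 < card D" using False D fin_CD by (auto simp: card_gt_0_iff)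
    then show ?thesis
      using prob_sign_agree_indep_normal[OF dist_sum[OF CD(3) False, folded U_def]
          dist_sum[OF CD(4) D, folded V_def] indep_UV]
      by (simp add: sum_c sum_c' real_sqrt_divide C_def D_def)
  qed
qed

lemma (in prob_space) prob_sign_agree_gaussian_row:
  fixes X :: "nat \<Rightarrow> 'a \<Rightarrow> real" and c c' :: "nat \<Rightarrow> real"
  assumes indep: "indep_vars (\<lambda>_. borel) X {..<n}"
    and dist: "\<And>j. j < n \<Longrightarrow> distributed M lborel (X j) (\<lambda>x. ennreal (normal_density 0 (sqrt (1/2)) x))"
    and c: "\<forall>j<n. c j \<in> {-1, 1}" and c': "\<forall>j<n. c' j \<in> {-1, 1}"
    and d: "d = card {j. j < n \<and> c j \<noteq> c' j}" "1 \<le> d"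
  shows "prob {\<omega> \<in> space M. rsign (\<Sum>j<n. X j \<omega> * c j) = rsign (\<Sum>j<n. X j \<omega> * c' j)}
    = 2 / pi * arctan (sqrt ((real n - real d) / real d))"
proof -
  have disagree: "{j \<in> {..<n}. c j \<noteq> c' j} = {j. j < n \<and> c j \<noteq> c' j}" by auto
  have agree: "{j \<in> {..<n}. c j = c' j} = {..<n} - {j. j < n \<and> c j \<noteq> c' j}" by auto
  have "card {j \<in> {..<n}. c j = c' j} = n - d"
    unfolding agree d(1) by (subst card_Diff_subset) auto
  moreover have "d \<le> n"
    unfolding d(1) using card_mono[of "{..<n}" "{j. j < n \<and> c j \<noteq> c' j}"] by auto
  moreover have "{j \<in> {..<n}. c j \<noteq> c' j} \<noteq> {}"
    using d unfolding disagree by (metis card.empty not_one_le_zero)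
  ultimately show ?thesis
    using prob_sign_agree_gaussian_sums[OF indep _ dist, of c c'] c c'
    by (simp add: disagree of_nat_diff flip: d(1))
qed

lemma (in prob_space) indep_sets_reindex:
  assumes inj: "inj_on f I" and indep: "indep_sets F (f ` I)"
  shows "indep_sets (\<lambda>i. F (f i)) I"
proof (rule indep_setsI)
  show "F (f i) \<subseteq> events" if "i \<in> I" for i
    using indep that by (auto simp: indep_sets_def)
next
  fix A J assume J: "J \<noteq> {}" "J \<subseteq> I" "finite J" and A: "\<forall>j\<in>J. A j \<in> F (f j)"
  define B where "B k = A (the_inv_into J f k)" for k
  have inj_J: "inj_on f J" using inj J(2) by (rule inj_on_subset)
  have B: "B (f j) = A j" if "j \<in> J" for j
    using the_inv_into_f_f[OF inj_J that] by (simp add: B_def)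
  have "prob (\<Inter>j\<in>J. A j) = prob (\<Inter>k\<in>f ` J. B k)" by (simp add: B)
  also have "\<dots> = (\<Prod>k\<in>f ` J. prob (B k))"
    using J A by (intro indep_setsD[OF indep]) (auto simp: B)
  also have "\<dots> = (\<Prod>j\<in>J. prob (A j))" by (simp add: prod.reindex[OF inj_J] B)
  finally show "prob (\<Inter>j\<in>J. A j) = (\<Prod>j\<in>J. prob (A j))" .
qed

lemma (in prob_space) indep_vars_reindex:
  assumes inj: "inj_on f I" and indep: "indep_vars M' X (f ` I)"
  shows "indep_vars (\<lambda>i. M' (f i)) (\<lambda>i. X (f i)) I"
  using indep indep_sets_reindex[OF inj, of "\<lambda>k. sigma_sets (space M) {X k -` A \<inter> space M |A. A \<in> sets (M' k)}"]
  by (auto simp: indep_vars_def)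

lemma (in prob_space) indep_vars_rows:
  assumes "indep_vars (\<lambda>_. N) (\<lambda>(r, j). Y r j) (R \<times> J)"
  shows "indep_vars (\<lambda>_. PiM J (\<lambda>_. N)) (\<lambda>r \<omega>. restrict (\<lambda>j. Y r j \<omega>) J) R"
proof -
  have "indep_vars (\<lambda>r. PiM ({r} \<times> J) (\<lambda>_. N)) (\<lambda>r \<omega>. restrict (\<lambda>p. (\<lambda>(r, j). Y r j) p \<omega>) ({r} \<times> J)) R"
    by (rule indep_vars_restrict[OF assms]) (auto simp: disjoint_family_on_def)
  then have "indep_vars (\<lambda>_. PiM J (\<lambda>_. N))
      (\<lambda>r \<omega>. restrict (\<lambda>j. restrict (\<lambda>p. (\<lambda>(r, j). Y r j) p \<omega>) ({r} \<times> J) (r, j)) J) R"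
  proof (rule indep_vars_compose2)
    show "(\<lambda>f. restrict (\<lambda>j. f (r, j)) J) \<in> measurable (PiM ({r} \<times> J) (\<lambda>_. N)) (PiM J (\<lambda>_. N))" for r
      by (rule measurable_restrict, rule measurable_component_singleton) auto
  qed
  then show ?thesis by (simp add: restrict_def cong: if_cong)
qed

lemma (in prob_space) prob_rows_sign_agree:
  fixes Y :: "'r \<Rightarrow> nat \<Rightarrow> 'a \<Rightarrow> real" and R :: "'r set" and c c' :: "nat \<Rightarrow> real"
  assumes indep: "indep_vars (\<lambda>_. borel) (\<lambda>(r, j). Y r j) (R \<times> {..<n})" and fin: "finite R"
    and dist: "\<And>r j. r \<in> R \<Longrightarrow> j < n \<Longrightarrow>
      distributed M lborel (Y r j) (\<lambda>x. ennreal (normal_density 0 (sqrt (1/2)) x))"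
    and c: "\<forall>j<n. c j \<in> {-1, 1}" and c': "\<forall>j<n. c' j \<in> {-1, 1}"
    and d: "d = card {j. j < n \<and> c j \<noteq> c' j}" "1 \<le> d"
  shows "prob {\<omega> \<in> space M. \<forall>r\<in>R. rsign (\<Sum>j<n. Y r j \<omega> * c j) = rsign (\<Sum>j<n. Y r j \<omega> * c' j)}
    = (2 / pi * arctan (sqrt ((real n - real d) / real d))) ^ card R"
proof -
  define agree :: "(nat \<Rightarrow> real) set" where
    "agree = {f \<in> space (PiM {..<n} (\<lambda>_. borel)). rsign (\<Sum>j<n. f j * c j) = rsign (\<Sum>j<n. f j * c' j)}"
  define row where "row r \<omega> = restrict (\<lambda>j. Y r j \<omega>) {..<n}" for r \<omega>
  have "(\<lambda>f. \<Sum>j<n. f j * b j) \<in> borel_measurable (PiM {..<n} (\<lambda>_. borel))" for b :: "nat \<Rightarrow> real"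
    by (rule borel_measurable_sum, rule borel_measurable_times, rule measurable_component_singleton) auto
  note this[of c, measurable] this[of c', measurable]
  have agree_sets: "agree \<in> sets (PiM {..<n} (\<lambda>_. borel))"
    unfolding agree_def by measurable
  have row_agree: "row r -` agree \<inter> space M
      = {\<omega> \<in> space M. rsign (\<Sum>j<n. Y r j \<omega> * c j) = rsign (\<Sum>j<n. Y r j \<omega> * c' j)}" for r
    by (auto simp: agree_def row_def space_PiM)
  have row_prob: "prob (row r -` agree \<inter> space M) = 2 / pi * arctan (sqrt ((real n - real d) / real d))"
    if r: "r \<in> R" for r
    unfolding row_agree
  proof (rule prob_sign_agree_gaussian_row)
    have "indep_vars (\<lambda>_. borel) (\<lambda>(r, j). Y r j) (Pair r ` {..<n})"
      using r by (intro indep_vars_subset[OF indep]) auto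
    from indep_vars_reindex[OF _ this] show "indep_vars (\<lambda>_. borel) (Y r) {..<n}"
      by (simp add: inj_on_def)
  qed (use dist[OF r] c c' d in auto)
  show ?thesis
  proof (cases "R = {}")
    case False
    have "prob (\<Inter>r\<in>R. row r -` agree \<inter> space M) = (\<Prod>r\<in>R. prob (row r -` agree \<inter> space M))"
      using indep_vars_rows[OF indep] False fin agree_sets unfolding row_def[abs_def]
      by (intro indep_varsD) auto
    moreover have "(\<Inter>r\<in>R. row r -` agree \<inter> space M)
        = {\<omega> \<in> space M. \<forall>r\<in>R. rsign (\<Sum>j<n. Y r j \<omega> * c j) = rsign (\<Sum>j<n. Y r j \<omega> * c' j)}"
      using False by (auto simp: row_agree)
    ultimately show ?thesis by (simp add: row_prob)
  qed (simp add: prob_space)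
qed

definition complex_part :: "bool \<Rightarrow> complex \<Rightarrow> real" where
  "complex_part b z = (if b then Re z else Im z)"

lemma csign_eq_csign_iff: "csign z = csign w \<longleftrightarrow> (\<forall>b. rsign (complex_part b z) = rsign (complex_part b w))"
  by (auto simp: csign_def complex_part_def complex_eq_iff)

lemma complex_part_mat_vec: "complex_part b (mat_vec n A x i) = (\<Sum>j<n. complex_part b (A i j) * x j)"
  by (simp add: complex_part_def mat_vec_def Re_sum Im_sum)

lemma (in prob_space) iid_CN_matrix_complex_parts:
  assumes "iid_CN_matrix M Nr Nt H"
  shows "indep_vars (\<lambda>_. borel) (\<lambda>((i, b), j) \<omega>. complex_part b (H i j \<omega>))
      (({..<Nr} \<times> UNIV) \<times> {..<Nt})"
    and "\<And>i b j. i < Nr \<Longrightarrow> j < Nt \<Longrightarrow> distributed M lborel (\<lambda>\<omega>. complex_part b (H i j \<omega>))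
      (\<lambda>x. ennreal (normal_density 0 (sqrt (1/2)) x))"
proof -
  note iid = assms[unfolded iid_CN_matrix_def]
  let ?f = "\<lambda>((i, b), j). (i, j, b)"
  have inj: "inj_on ?f (({..<Nr} \<times> UNIV) \<times> {..<Nt})" by (auto simp: inj_on_def)
  have img: "?f ` (({..<Nr} \<times> UNIV) \<times> {..<Nt}) = {..<Nr} \<times> {..<Nt} \<times> UNIV"
    by (auto intro!: rev_image_eqI)
  have indep: "indep_vars (\<lambda>_. borel)
      (\<lambda>(i, j, b) \<omega>. if b then Re (H i j \<omega>) else Im (H i j \<omega>)) (?f ` (({..<Nr} \<times> UNIV) \<times> {..<Nt}))"
    using iid unfolding img by blast
  have "(\<lambda>p. (\<lambda>(i, j, b) \<omega>. if b then Re (H i j \<omega>) else Im (H i j \<omega>)) (?f p))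
      = (\<lambda>((i, b), j) \<omega>. complex_part b (H i j \<omega>))"
    by (auto simp: complex_part_def fun_eq_iff)
  with indep_vars_reindex[OF inj indep]
  show "indep_vars (\<lambda>_. borel) (\<lambda>((i, b), j) \<omega>. complex_part b (H i j \<omega>)) (({..<Nr} \<times> UNIV) \<times> {..<Nt})"
    by simp
  show "distributed M lborel (\<lambda>\<omega>. complex_part b (H i j \<omega>)) (\<lambda>x. ennreal (normal_density 0 (sqrt (1/2)) x))"
    if "i < Nr" "j < Nt" for i b j
    using iid that by (cases b) (simp_all add: complex_part_def)
qed

theorem theorem1:
  fixes M :: "'a measure" and Nr Nt d :: nat
    and H :: "nat \<Rightarrow> nat \<Rightarrow> 'a \<Rightarrow> complex"
    and x x' :: "nat \<Rightarrow> real"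
  assumes "prob_space M"
    and "Nt \<ge> 1" and "Nr \<ge> 1"
    and "iid_CN_matrix M Nr Nt H"
    and "\<forall>j<Nt. x j \<in> {-1, 1}" and "\<forall>j<Nt. x' j \<in> {-1, 1}"
    and "d = card {j. j < Nt \<and> x j \<noteq> x' j}"
    and "1 \<le> d" and "d \<le> Nt"
  shows "measure M {\<omega> \<in> space M. \<forall>i<Nr.
            csign (mat_vec Nt (\<lambda>i j. H i j \<omega>) x i) = csign (mat_vec Nt (\<lambda>i j. H i j \<omega>) x' i)}
         = ((2 / pi) * arctan (sqrt ((real Nt - real d) / real d))) ^ (2 * Nr)"
proof -
  \<comment> \<open>\<open>d \<le> Nt\<close> follows from the definition of \<open>d\<close>.\<close>
  interpret prob_space M by fact
  define R where "R = {..<Nr} \<times> (UNIV :: bool set)"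
  define Y where "Y = (\<lambda>(i, b) j \<omega>. complex_part b (H i j \<omega>))"
  have "{\<omega> \<in> space M. \<forall>i<Nr.
            csign (mat_vec Nt (\<lambda>i j. H i j \<omega>) x i) = csign (mat_vec Nt (\<lambda>i j. H i j \<omega>) x' i)}
      = {\<omega> \<in> space M. \<forall>r\<in>R. rsign (\<Sum>j<Nt. Y r j \<omega> * x j) = rsign (\<Sum>j<Nt. Y r j \<omega> * x' j)}"
    by (auto simp: R_def Y_def csign_eq_csign_iff complex_part_mat_vec)
  also have "prob \<dots> = (2 / pi * arctan (sqrt ((real Nt - real d) / real d))) ^ card R"
    using iid_CN_matrix_complex_parts[OF assms(4)] assms(5-8)
    by (intro prob_rows_sign_agree) (auto simp: R_def Y_def case_prod_unfold)
  also have "card R = 2 * Nr" by (simp add: R_def card_cartesian_product)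
  finally show ?thesis .
qed

end
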